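(* Let $D$ be a strong nonseparable digraph, let $H$ be a strong nonseparable subdigraph of $D$, and let $P=(x_0,x_1,\ldots,x_{r-1},x_r)$ be an ear of $H$ in $D$ with length $l(P)=r\geq 2$. Suppose $H$ has a kernel $N$ and one of the following holds: (1) $x_0,x_r\in N$ and $l(P)$ is even; (2) $x_0\in N$, $x_r\notin N$ and $l(P)$ is odd; (3) $x_0\notin N$ and $x_r\in N$; (4) $x_0,x_r\notin N$. Then $H'=H\cup P$ has a kernel.
   Context: All digraphs are finite, without loops or multiple arcs. Paths and cycles are directed; the length of a path is its number of arcs. A digraph is strong if for every ordered pair of vertices $x,y$ there is a directed path from $x$ to $y$; it is nonseparable if its underlying undirected graph is nonseparable (has no cut vertex). For a subdigraph $H$ of $D$, an ear of $H$ in $D$ is a directed path $(x_0,\ldots,x_r)$ in $D$ whose end vertices $x_0,x_r$ lie in $H$ and whose internal vertices $x_1,\ldots,x_{r-1}$ do not lie in $H$ (or a directed cycle with exactly one vertex $x_0=x_r$ in $H$). A kernel of a digraph is a set $N$ of vertices that is independent (no arc between two of its vertices) and absorbent (every vertex not in $N$ has an out-neighbour in $N$). *)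

theory Defs
  imports Main
begin

definition digraph :: "'a set \<Rightarrow> ('a \<times> 'a) set \<Rightarrow> bool" where
  "digraph V A \<longleftrightarrow> finite V \<and> A \<subseteq> V \<times> V \<and> (\<forall>x. (x, x) \<notin> A)"

definition subdigraph :: "'a set \<Rightarrow> ('a \<times> 'a) set \<Rightarrow> 'a set \<Rightarrow> ('a \<times> 'a) set \<Rightarrow> bool" where
  "subdigraph VH AH V A \<longleftrightarrow> digraph VH AH \<and> VH \<subseteq> V \<and> AH \<subseteq> A"

definition strong :: "'a set \<Rightarrow> ('a \<times> 'a) set \<Rightarrow> bool" where
  "strong V A \<longleftrightarrow> (\<forall>x\<in>V. \<forall>y\<in>V. (x, y) \<in> A\<^sup>*)"

definition und_connected_on :: "'a set \<Rightarrow> ('a \<times> 'a) set \<Rightarrow> bool" where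
  "und_connected_on W A \<longleftrightarrow>
     (\<forall>x\<in>W. \<forall>y\<in>W. (x, y) \<in> ((A \<union> A\<inverse>) \<inter> (W \<times> W))\<^sup>*)"

definition nonseparable :: "'a set \<Rightarrow> ('a \<times> 'a) set \<Rightarrow> bool" where
  "nonseparable V A \<longleftrightarrow> und_connected_on V A \<and> (\<forall>v\<in>V. und_connected_on (V - {v}) A)"

definition kernel :: "'a set \<Rightarrow> ('a \<times> 'a) set \<Rightarrow> 'a set \<Rightarrow> bool" where
  "kernel V A N \<longleftrightarrow> N \<subseteq> V \<and> (\<forall>x\<in>N. \<forall>y\<in>N. (x, y) \<notin> A)
     \<and> (\<forall>v\<in>V - N. \<exists>u\<in>N. (v, u) \<in> A)"

definition walk_arcs :: "'a list \<Rightarrow> ('a \<times> 'a) set" where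
  "walk_arcs xs = {(xs ! i, xs ! Suc i) | i. Suc i < length xs}"

text \<open>An ear of H = (VH, AH) in D = (V, A), given as the vertex list [x_0, ..., x_r]
  (length r + 1, r \<ge> 1): consecutive vertices are arcs of D, the end vertices lie in H,
  the internal vertices are pairwise distinct and lie outside H. If x_0 \<noteq> x_r this is a
  directed path; if x_0 = x_r it is a directed cycle meeting H in exactly x_0.\<close>
definition ear :: "'a set \<Rightarrow> ('a \<times> 'a) set \<Rightarrow> 'a set \<Rightarrow> ('a \<times> 'a) set \<Rightarrow> 'a list \<Rightarrow> bool" where
  "ear VH AH V A xs \<longleftrightarrow> length xs \<ge> 2 \<and> walk_arcs xs \<subseteq> A
     \<and> hd xs \<in> VH \<and> last xs \<in> VH
     \<and> distinct (butlast (tl xs)) \<and> set (butlast (tl xs)) \<inter> VH = {}"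

end

theory Submission
  imports Defs
begin

text \<open>Extend the kernel N of H along the ear x_0, ..., x_r by labelling the internal vertices
  backwards from x_r, alternately in and out of the kernel, starting with the label of x_r
  itself: x_i is taken iff r - i is even when x_r \<in> N, and iff r - i is odd when x_r \<notin> N.
  Consecutive internal vertices then never agree, every untaken one points to a taken
  successor, and the only possible conflict is the arc x_0 x_1 when x_0 \<in> N; the parity
  hypotheses exclude exactly the cases in which x_1 would be taken.\<close>

definition ear_mark :: "'a set \<Rightarrow> 'a list \<Rightarrow> nat \<Rightarrow> bool" where
  "ear_mark N P i \<longleftrightarrow>
     (if i = 0 then hd P \<in> N else (last P \<in> N \<longleftrightarrow> even (length P - 1 - i)))"

definition ear_kernel :: "'a set \<Rightarrow> 'a list \<Rightarrow> 'a set" where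
  "ear_kernel N P = N \<union> {P ! i | i. 0 < i \<and> i < length P - 1 \<and> ear_mark N P i}"

lemma ear_nth_internal:
  assumes "ear VH AH V A P" and "0 < i" and "i < length P - 1"
  shows "P ! i = butlast (tl P) ! (i - 1)" and "P ! i \<in> set (butlast (tl P))"
proof -
  show "P ! i = butlast (tl P) ! (i - 1)"
    using assms by (simp add: nth_butlast nth_tl)
  moreover have "i - 1 < length (butlast (tl P))"
    using assms by simp
  ultimately show "P ! i \<in> set (butlast (tl P))"
    by (metis nth_mem)
qed

lemma ear_nth_internal_notin:
  assumes "ear VH AH V A P" and "0 < i" and "i < length P - 1"
  shows "P ! i \<notin> VH"
  using ear_nth_internal(2)[OF assms] assms(1) by (auto simp: ear_def)

lemma ear_nth_internal_inj:
  assumes "ear VH AH V A P"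
    and "0 < i" "i < length P - 1" "0 < j" "j < length P - 1"
    and "P ! i = P ! j"
  shows "i = j"
proof -
  have "butlast (tl P) ! (i - 1) = butlast (tl P) ! (j - 1)"
    using assms ear_nth_internal(1) by metis
  then have "i - 1 = j - 1"
    using assms by (simp add: ear_def nth_eq_iff_index_eq)
  then show ?thesis using assms by simp
qed

lemma ear_kernel_inter:
  assumes "kernel VH AH N" and "ear VH AH V A P"
  shows "ear_kernel N P \<inter> VH = N"
  using assms(1) ear_nth_internal_notin[OF assms(2)]
  by (auto simp: ear_kernel_def kernel_def)

lemma ear_nth_in_ear_kernel_iff:
  assumes "kernel VH AH N" and "ear VH AH V A P" and "i < length P"
  shows "P ! i \<in> ear_kernel N P \<longleftrightarrow> ear_mark N P i"
proof -
  have "P \<noteq> []" and ends: "hd P \<in> VH" "last P \<in> VH"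
    using assms(2,3) by (auto simp: ear_def)
  have in_VH: "x \<in> ear_kernel N P \<longleftrightarrow> x \<in> N" if "x \<in> VH" for x
    using ear_kernel_inter[OF assms(1,2)] that by blast
  consider "i = 0" | "i = length P - 1" "i \<noteq> 0" | "0 < i" "i < length P - 1"
    using assms(3) by linarith
  then show ?thesis
  proof cases
    case 1
    then show ?thesis
      using in_VH[OF ends(1)] \<open>P \<noteq> []\<close> by (simp add: ear_mark_def hd_conv_nth)
  next
    case 2
    then show ?thesis
      using in_VH[OF ends(2)] \<open>P \<noteq> []\<close> by (simp add: ear_mark_def last_conv_nth)
  next
    case 3
    have "P ! i \<notin> N"
      using ear_nth_internal_notin[OF assms(2) 3] assms(1) by (auto simp: kernel_def)
    moreover have "P ! i = P ! j \<longleftrightarrow> i = j" if "0 < j" "j < length P - 1" for j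
      using ear_nth_internal_inj[OF assms(2) 3 that] by blast
    ultimately show ?thesis using 3 by (auto simp: ear_kernel_def)
  qed
qed

lemma ear_mark_Suc:
  assumes "0 < i" and "Suc i < length P"
  shows "ear_mark N P (Suc i) \<longleftrightarrow> \<not> ear_mark N P i"
  using assms by (auto simp: ear_mark_def Suc_diff_Suc)

lemma ear_mark_not_consecutive:
  assumes "hd P \<in> N \<longrightarrow> (last P \<in> N \<longleftrightarrow> even (length P - 1))"
    and "Suc i < length P"
  shows "\<not> (ear_mark N P i \<and> ear_mark N P (Suc i))"
proof (cases "i = 0")
  case True
  then show ?thesis using assms by (auto simp: ear_mark_def)
next
  case False
  then show ?thesis using ear_mark_Suc assms(2) by blast
qed

lemma ear_kernel_independent:
  assumes "kernel VH AH N" and "AH \<subseteq> VH \<times> VH" and "ear VH AH V A P"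
    and "hd P \<in> N \<longrightarrow> (last P \<in> N \<longleftrightarrow> even (length P - 1))"
    and "x \<in> ear_kernel N P" and "y \<in> ear_kernel N P"
  shows "(x, y) \<notin> AH \<union> walk_arcs P"
proof
  assume "(x, y) \<in> AH \<union> walk_arcs P"
  then show False
  proof
    assume "(x, y) \<in> AH"
    moreover have "x \<in> N" "y \<in> N"
      using \<open>(x, y) \<in> AH\<close> assms(2,5,6) ear_kernel_inter[OF assms(1,3)] by auto
    ultimately show False using assms(1) by (auto simp: kernel_def)
  next
    assume "(x, y) \<in> walk_arcs P"
    then obtain i where i: "Suc i < length P" "x = P ! i" "y = P ! Suc i"
      by (auto simp: walk_arcs_def)
    then have "ear_mark N P i" "ear_mark N P (Suc i)"
      using ear_nth_in_ear_kernel_iff[OF assms(1,3)] assms(5,6) by auto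
    then show False
      using ear_mark_not_consecutive[OF assms(4) i(1)] by blast
  qed
qed

lemma ear_kernel_absorbent:
  assumes "kernel VH AH N" and "ear VH AH V A P"
    and "v \<in> VH \<union> set P - ear_kernel N P"
  shows "\<exists>u\<in>ear_kernel N P. (v, u) \<in> AH \<union> walk_arcs P"
proof (cases "v \<in> VH")
  case True
  moreover have "v \<notin> N" using assms(3) by (auto simp: ear_kernel_def)
  ultimately obtain u where "u \<in> N" "(v, u) \<in> AH"
    using assms(1) unfolding kernel_def by blast
  then show ?thesis by (auto simp: ear_kernel_def)
next
  case False
  then obtain i where i: "i < length P" "v = P ! i"
    using assms(3) by (auto simp: in_set_conv_nth)
  then have "P \<noteq> []" by auto
  have "i \<noteq> 0" "i \<noteq> length P - 1"
    using False i assms(2) \<open>P \<noteq> []\<close> by (auto simp: ear_def hd_conv_nth last_conv_nth)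
  then have "0 < i" "Suc i < length P" using i by auto
  have "\<not> ear_mark N P i"
    using ear_nth_in_ear_kernel_iff[OF assms(1,2) i(1)] i assms(3) by auto
  then have "P ! Suc i \<in> ear_kernel N P"
    using ear_mark_Suc[OF \<open>0 < i\<close> \<open>Suc i < length P\<close>]
      ear_nth_in_ear_kernel_iff[OF assms(1,2) \<open>Suc i < length P\<close>] by blast
  moreover have "(v, P ! Suc i) \<in> walk_arcs P"
    using i \<open>Suc i < length P\<close> by (auto simp: walk_arcs_def)
  ultimately show ?thesis by blast
qed

lemma kernel_ear_kernel:
  assumes "kernel VH AH N" and "AH \<subseteq> VH \<times> VH" and "ear VH AH V A P"
    and "hd P \<in> N \<longrightarrow> (last P \<in> N \<longleftrightarrow> even (length P - 1))"
  shows "kernel (VH \<union> set P) (AH \<union> walk_arcs P) (ear_kernel N P)"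
proof -
  have "ear_kernel N P \<subseteq> VH \<union> set P"
    using assms(1) by (auto simp: ear_kernel_def kernel_def)
  then show ?thesis
    unfolding kernel_def
    using ear_kernel_independent[OF assms] ear_kernel_absorbent[OF assms(1,3)] by blast
qed

theorem mainTheorem9:
  fixes V :: "'a set" and A :: "('a \<times> 'a) set"
    and VH :: "'a set" and AH :: "('a \<times> 'a) set"
    and P :: "'a list" and N :: "'a set"
  assumes "digraph V A" and "strong V A" and "nonseparable V A"
    and "subdigraph VH AH V A" and "strong VH AH" and "nonseparable VH AH"
    and "ear VH AH V A P" and "length P - 1 \<ge> 2"
    and "kernel VH AH N"
    and "(hd P \<in> N \<and> last P \<in> N \<and> even (length P - 1))
       \<or> (hd P \<in> N \<and> last P \<notin> N \<and> odd (length P - 1))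
       \<or> (hd P \<notin> N \<and> last P \<in> N)
       \<or> (hd P \<notin> N \<and> last P \<notin> N)"
  shows "\<exists>N'. kernel (VH \<union> set P) (AH \<union> walk_arcs P) N'"
proof -
  have "AH \<subseteq> VH \<times> VH"
    using assms(4) by (simp add: subdigraph_def digraph_def)
  moreover have "hd P \<in> N \<longrightarrow> (last P \<in> N \<longleftrightarrow> even (length P - 1))"
    using assms(10) by blast
  ultimately show ?thesis
    using kernel_ear_kernel[OF assms(9) _ assms(7)] by blast
qed

end
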